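(* Fix $\tilde r^2>0$, $\tilde\sigma^2>0$ (an observational family) and $\gamma\in(0,\infty)$. Then the optimal causal regularization $\lambda_C(\gamma)$ depends on the causal model only through its confounding strength $\zeta$. With $$\rho(\gamma,\mathrm{SNR}_{\rm stat})=-\mathrm{SNR}_{\rm stat}^{-1}\frac{\gamma\max\{1,\gamma\}}{(1-\gamma)^2}$$ (interpreted as $-\infty$ when $\gamma=1$), the following hold: - if $\zeta\le\rho(\gamma,\mathrm{SNR}_{\rm stat})$, then $\lambda_C=0$; - if $\rho(\gamma,\mathrm{SNR}_{\rm stat})<\zeta<1$, then $\lambda_C\in(0,\infty)$ and $\lambda_C$ is a differentiable function of $\zeta$ with $\partial_\zeta\lambda_C(\gamma)>0$; - if $\zeta\ge1$, then $\lambda_C=\infty$.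
   Context: Setting: isotropic linear causal models $z\sim\mathcal N(0,I_l)$, $\varepsilon\sim\mathcal N(0,\sigma^2)$, $x=Mz$ with $MM^T=I_d$, and $y=x^T\beta+z^T\alpha+\varepsilon$. Write $\Gamma=M\alpha$, $\tilde\beta=\beta+\Gamma$ and $\tilde\sigma^2=\sigma^2+\|\alpha\|^2-\|\Gamma\|^2$. Asymptotically the model is summarized by constants $\|\beta\|^2=r^2$, $\|\Gamma\|^2=\omega^2$, $\langle\Gamma,\beta\rangle=\eta$ and $\tilde\sigma^2$, with $\tilde r^2=r^2+\omega^2+2\eta$. Observational family: models entailing the same observational distribution share $\tilde r^2$ and $\tilde\sigma^2$, while $(\omega^2,\eta)$ vary. Derived quantities: confounding strength $\zeta=(\omega^2+\eta)/\tilde r^2$ and $\mathrm{SNR}_{\rm stat}=\tilde r^2/\tilde\sigma^2$. Limiting causal risk of ridge regression with parameter $\lambda>0$ at ratio $\gamma=\lim d/n$: $$\mathcal R_\lambda(\gamma)=\omega^2+\tilde r^2\lambda^2m'(-\lambda)-2(\omega^2+\eta)\lambda m(-\lambda)+\tilde\sigma^2\gamma\big(m(-\lambda)-\lambda m'(-\lambda)\big)+\tilde\sigma^2+\omega^2,$$ where $m(z)=\frac{(1-\gamma-z)-\sqrt{(1-\gamma-z)^2-4\gamma z}}{2\gamma z}$ and $m'$ is its derivative. Optimal causal regularization: $\lambda_C(\gamma)=\arg\inf_{\lambda\in(0,\infty)}\mathcal R_\lambda(\gamma)$. By convention $\lambda_C=0$ if the infimum is attained only as $\lambda\to0^+$,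 and $\lambda_C=\infty$ if it is attained only as $\lambda\to\infty$. *)

theory Defs
  imports "HOL-Analysis.Analysis"
begin

text \<open>Stieltjes transform of the Marchenko-Pastur law with ratio gamma, evaluated at real z (used at z = -lambda < 0).\<close>
definition mp_m :: "real \<Rightarrow> real \<Rightarrow> real" where
  "mp_m \<gamma> z = ((1 - \<gamma> - z) - sqrt ((1 - \<gamma> - z)^2 - 4 * \<gamma> * z)) / (2 * \<gamma> * z)"

text \<open>Limiting causal risk of ridge regression with parameter lambda, for a model with
  constants r2t = tilde r^2, s2t = tilde sigma^2, w2 = omega^2 and eta.\<close>
definition causal_risk :: "real \<Rightarrow> real \<Rightarrow> real \<Rightarrow> real \<Rightarrow> real \<Rightarrow> real \<Rightarrow> real" where
  "causal_risk \<gamma> r2t s2t w2 \<eta> lam =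
     w2 + r2t * lam^2 * deriv (mp_m \<gamma>) (-lam)
        - 2 * (w2 + \<eta>) * lam * mp_m \<gamma> (-lam)
        + s2t * \<gamma> * (mp_m \<gamma> (-lam) - lam * deriv (mp_m \<gamma>) (-lam))
        + s2t + w2"

definition conf_strength :: "real \<Rightarrow> real \<Rightarrow> real \<Rightarrow> real" where
  "conf_strength r2t w2 \<eta> = (w2 + \<eta>) / r2t"

definition rho_thr :: "real \<Rightarrow> real \<Rightarrow> ereal" where
  "rho_thr \<gamma> snr = (if \<gamma> = 1 then -\<infinity>
      else ereal (- (1 / snr) * (\<gamma> * max 1 \<gamma>) / (1 - \<gamma>)^2))"

text \<open>Admissible model constants in the observational family with given r2t:
  omega^2 >= 0, r^2 = r2t - omega^2 - 2 eta >= 0 and Cauchy-Schwarz eta^2 <= r^2 omega^2.\<close>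
definition admissible :: "real \<Rightarrow> real \<Rightarrow> real \<Rightarrow> bool" where
  "admissible r2t w2 \<eta> \<longleftrightarrow> w2 \<ge> 0 \<and> r2t - w2 - 2 * \<eta> \<ge> 0 \<and> \<eta>^2 \<le> (r2t - w2 - 2 * \<eta>) * w2"

end

theory Submission
  imports Defs "HOL-Real_Asymp.Real_Asymp"
begin

text \<open>On \<open>\<lambda> > 0\<close> the causal risk has derivative \<open>2 r\<^sup>2 g'(\<lambda>) (\<phi>(\<lambda>) - \<zeta>)\<close>, where
  \<open>g(\<lambda>) = \<lambda> m(-\<lambda>)\<close> is strictly increasing and \<open>\<phi>\<close> (below \<open>zeta_of_lambda\<close>) increases strictly
  from \<open>\<rho>\<close> at \<open>\<lambda> = 0\<close> (from \<open>-\<infinity>\<close> when \<open>\<gamma> = 1\<close>) towards \<open>1\<close> as \<open>\<lambda> \<rightarrow> \<infinity>\<close>. So the risk increases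
  on \<open>(0,\<infinity>)\<close> if \<open>\<zeta> \<le> \<rho>\<close>, decreases if \<open>\<zeta> \<ge> 1\<close>, and otherwise has its unique minimum at
  \<open>\<phi>\<^sup>-\<^sup>1(\<zeta>)\<close>, a differentiable increasing function of \<open>\<zeta>\<close> by the inverse function theorem.\<close>

lemma DERIV_pos_imp_less:
  fixes f f' :: "real \<Rightarrow> real"
  assumes "a < b"
    and "\<And>x. a \<le> x \<Longrightarrow> x \<le> b \<Longrightarrow> (f has_real_derivative f' x) (at x)"
    and "\<And>x. a < x \<Longrightarrow> x < b \<Longrightarrow> f' x > 0"
  shows "f a < f b"
proof (rule DERIV_pos_imp_increasing_open[OF assms(1)])
  show "\<exists>y. (f has_real_derivative y) (at x) \<and> y > 0" if "a < x" "x < b" for x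
    using assms(2)[of x] assms(3)[OF that] that by auto
  show "continuous_on {a..b} f"
    using assms(2) by (intro continuous_at_imp_continuous_on ballI DERIV_isCont) auto
qed

lemma DERIV_neg_imp_greater:
  fixes f f' :: "real \<Rightarrow> real"
  assumes "a < b"
    and "\<And>x. a \<le> x \<Longrightarrow> x \<le> b \<Longrightarrow> (f has_real_derivative f' x) (at x)"
    and "\<And>x. a < x \<Longrightarrow> x < b \<Longrightarrow> f' x < 0"
  shows "f a > f b"
proof -
  have "- f a < - f b"
    by (rule DERIV_pos_imp_less[OF assms(1), of _ "\<lambda>x. - f' x"])
       (use assms(2,3) in \<open>auto intro: DERIV_minus\<close>)
  then show ?thesis
    by simp
qed

text \<open>\<open>mp_disc \<gamma> \<lambda> = (1 + \<gamma> + \<lambda>)\<^sup>2 - 4\<gamma>\<close> is the discriminant in \<open>m(-\<lambda>)\<close>;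
  \<open>mp_lm \<gamma> \<lambda> = \<lambda> m(-\<lambda>)\<close>, and \<open>mp_lm'\<close> is its derivative in \<open>\<lambda>\<close>.\<close>
definition mp_disc :: "real \<Rightarrow> real \<Rightarrow> real" where
  "mp_disc \<gamma> l = l^2 + 2*(1+\<gamma>)*l + (1-\<gamma>)^2"

definition mp_root :: "real \<Rightarrow> real \<Rightarrow> real" where
  "mp_root \<gamma> l = sqrt (mp_disc \<gamma> l)"

definition mp_lm :: "real \<Rightarrow> real \<Rightarrow> real" where
  "mp_lm \<gamma> l = (mp_root \<gamma> l - l - 1 + \<gamma>) / (2*\<gamma>)"

definition mp_lm' :: "real \<Rightarrow> real \<Rightarrow> real" where
  "mp_lm' \<gamma> l = (l + 1 + \<gamma> - mp_root \<gamma> l) / (2*\<gamma>*mp_root \<gamma> l)"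

lemma mp_disc_pos: "\<gamma> > 0 \<Longrightarrow> l > 0 \<Longrightarrow> mp_disc \<gamma> l > 0"
  unfolding mp_disc_def by (simp add: add_pos_nonneg)

lemma mp_disc_zero_pos: "\<gamma> \<noteq> 1 \<Longrightarrow> mp_disc \<gamma> 0 > 0"
  unfolding mp_disc_def by simp

lemma mp_disc_pos_mono:
  assumes "\<gamma> > 0" "0 \<le> x" "x \<le> y" "mp_disc \<gamma> x > 0"
  shows "mp_disc \<gamma> y > 0"
  using assms mp_disc_pos[of \<gamma> y] by (cases "y = x") auto

lemma mp_root_pos: "mp_disc \<gamma> l > 0 \<Longrightarrow> mp_root \<gamma> l > 0"
  by (simp add: mp_root_def)

lemma mp_root_sq: "mp_disc \<gamma> l > 0 \<Longrightarrow> mp_root \<gamma> l ^ 2 = mp_disc \<gamma> l"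
  by (simp add: mp_root_def)

lemma mp_root_bounds:
  assumes "\<gamma> > 0" "l \<ge> 0" "mp_disc \<gamma> l > 0"
  shows "l < mp_root \<gamma> l" "mp_root \<gamma> l < l + 1 + \<gamma>"
proof -
  have "l^2 < mp_disc \<gamma> l"
    using assms unfolding mp_disc_def
    by (cases "l = 0") (auto simp: power2_eq_square intro!: add_pos_nonneg)
  then have "sqrt (l^2) < mp_root \<gamma> l"
    unfolding mp_root_def by (rule real_sqrt_less_mono)
  then show "l < mp_root \<gamma> l"
    using assms by simp
  have "mp_disc \<gamma> l < (l+1+\<gamma>)^2"
    using assms by (simp add: mp_disc_def power2_eq_square algebra_simps)
  then have "mp_root \<gamma> l < sqrt ((l+1+\<gamma>)^2)"
    unfolding mp_root_def by (rule real_sqrt_less_mono)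
  then show "mp_root \<gamma> l < l + 1 + \<gamma>"
    using assms by simp
qed

lemma mp_lm'_pos: "\<gamma> > 0 \<Longrightarrow> l \<ge> 0 \<Longrightarrow> mp_disc \<gamma> l > 0 \<Longrightarrow> mp_lm' \<gamma> l > 0"
  using mp_root_pos mp_root_bounds unfolding mp_lm'_def by (auto intro!: divide_pos_pos)

lemma mp_m_eq_mp_lm:
  assumes "\<gamma> > 0" "l > 0"
  shows "mp_m \<gamma> (-l) = mp_lm \<gamma> l / l"
proof -
  have "(1 - \<gamma> - -l)^2 - 4*\<gamma>*(-l) = mp_disc \<gamma> l"
    by (simp add: mp_disc_def power2_eq_square algebra_simps)
  then show ?thesis
    unfolding mp_m_def mp_lm_def mp_root_def using assms by (simp add: field_simps)
qed

lemma mp_disc_has_derivative: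
  "(mp_disc \<gamma> has_real_derivative 2*(l+1+\<gamma>)) (at l)"
  unfolding mp_disc_def[abs_def] by (auto intro!: derivative_eq_intros simp: algebra_simps)

lemma mp_root_has_derivative:
  assumes "mp_disc \<gamma> l > 0"
  shows "(mp_root \<gamma> has_real_derivative (l+1+\<gamma>) / mp_root \<gamma> l) (at l)"
  unfolding mp_root_def[abs_def]
  by (rule DERIV_cong[OF DERIV_chain2[OF DERIV_real_sqrt mp_disc_has_derivative]])
     (use assms in \<open>auto simp: mp_root_def field_simps\<close>)

lemma mp_lm_has_derivative:
  assumes "\<gamma> > 0" "mp_disc \<gamma> l > 0"
  shows "(mp_lm \<gamma> has_real_derivative mp_lm' \<gamma> l) (at l)"
  unfolding mp_lm_def[abs_def] mp_lm'_def using assms mp_root_pos[OF assms(2)]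
  by (auto intro!: derivative_eq_intros mp_root_has_derivative simp: field_simps)

lemma mp_lm'_has_derivative:
  assumes "\<gamma> > 0" "mp_disc \<gamma> l > 0"
  shows "(mp_lm' \<gamma> has_real_derivative -2 / mp_root \<gamma> l ^ 3) (at l)"
  unfolding mp_lm'_def[abs_def] using assms mp_root_pos[OF assms(2)] mp_root_sq[OF assms(2)]
  by (auto intro!: derivative_eq_intros mp_root_has_derivative simp: field_simps mp_disc_def) algebra

definition ridge_risk :: "real \<Rightarrow> real \<Rightarrow> real \<Rightarrow> real \<Rightarrow> real \<Rightarrow> real \<Rightarrow> real" where
  "ridge_risk \<gamma> r2t s2t w2 \<eta> l =
     2*w2 + s2t + r2t*(mp_lm \<gamma> l - l*mp_lm' \<gamma> l) - 2*(w2+\<eta>)*mp_lm \<gamma> l + s2t*\<gamma>*mp_lm' \<gamma> l"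

lemma causal_risk_eq_ridge_risk:
  assumes "\<gamma> > 0" "l > 0"
  shows "causal_risk \<gamma> r2t s2t w2 \<eta> l = ridge_risk \<gamma> r2t s2t w2 \<eta> l"
proof -
  have "(mp_m \<gamma> has_real_derivative (mp_lm \<gamma> l - l*mp_lm' \<gamma> l) / l^2) (at (-l))"
  proof (rule has_field_derivative_transform_within_open[where S = "{..<0}"])
    show "((\<lambda>x. mp_lm \<gamma> (-x) / (-x)) has_real_derivative (mp_lm \<gamma> l - l*mp_lm' \<gamma> l) / l^2) (at (-l))"
      using assms mp_disc_pos[OF assms]
      by (auto intro!: derivative_eq_intros DERIV_chain2[OF mp_lm_has_derivative]
          simp: field_simps power2_eq_square)
    show "mp_lm \<gamma> (-x) / (-x) = mp_m \<gamma> x" if "x \<in> {..<0}" for x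
      using mp_m_eq_mp_lm[of \<gamma> "-x"] assms that by simp
  qed (use assms in auto)
  then have deriv_mp_m: "deriv (mp_m \<gamma>) (-l) = (mp_lm \<gamma> l - l*mp_lm' \<gamma> l) / l^2"
    by (rule DERIV_imp_deriv)
  show ?thesis
    unfolding causal_risk_def ridge_risk_def deriv_mp_m mp_m_eq_mp_lm[OF assms] using assms
    by (simp add: field_simps power2_eq_square)
qed

text \<open>\<open>\<lambda>\<close> is a critical point of the risk exactly for the confounding strength
  \<open>zeta_of_lambda \<gamma> s \<lambda>\<close>, where \<open>s = \<sigma>\<^sup>2 \<gamma> / r\<^sup>2 = \<gamma> / SNR\<close> (see \<open>ridge_risk_has_derivative\<close>).\<close>
definition zeta_of_lambda :: "real \<Rightarrow> real \<Rightarrow> real \<Rightarrow> real" where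
  "zeta_of_lambda \<gamma> s l = (l - s) * (l + 1 + \<gamma> + mp_root \<gamma> l) / (2 * mp_disc \<gamma> l)"

definition zeta_of_lambda' :: "real \<Rightarrow> real \<Rightarrow> real \<Rightarrow> real" where
  "zeta_of_lambda' \<gamma> s l = (l + 1 + \<gamma> + mp_root \<gamma> l) / (2 * mp_root \<gamma> l ^ 4) *
     ((1-\<gamma>)^2 + l * (mp_root \<gamma> l - l) + s * (2 * (l + 1 + \<gamma>) - mp_root \<gamma> l))"

lemma mp_lm'_mult_conj:
  assumes "\<gamma> > 0" "mp_disc \<gamma> l > 0"
  shows "mp_lm' \<gamma> l * (l + 1 + \<gamma> + mp_root \<gamma> l) = 2 / mp_root \<gamma> l"
proof -
  have "mp_lm' \<gamma> l * (l + 1 + \<gamma> + mp_root \<gamma> l)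
      = ((l + 1 + \<gamma>)^2 - mp_root \<gamma> l ^ 2) / (2 * \<gamma> * mp_root \<gamma> l)"
    unfolding mp_lm'_def by (simp add: power2_eq_square algebra_simps)
  also have "(l + 1 + \<gamma>)^2 - mp_root \<gamma> l ^ 2 = 4 * \<gamma>"
    using mp_root_sq[OF assms(2)] by (simp add: mp_disc_def power2_eq_square algebra_simps)
  finally show ?thesis
    using assms(1) mp_root_pos[OF assms(2)] by simp
qed

lemma ridge_risk_has_derivative:
  assumes "\<gamma> > 0" "r2t > 0" "mp_disc \<gamma> l > 0"
  shows "(ridge_risk \<gamma> r2t s2t w2 \<eta> has_real_derivative
           2 * r2t * mp_lm' \<gamma> l * (zeta_of_lambda \<gamma> (s2t*\<gamma>/r2t) l - conf_strength r2t w2 \<eta>)) (at l)"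
proof -
  define S where "S = mp_root \<gamma> l"
  have S: "S > 0" "mp_disc \<gamma> l = S^2"
    using mp_root_pos[OF assms(3)] mp_root_sq[OF assms(3)] by (simp_all add: S_def)
  have deriv: "(ridge_risk \<gamma> r2t s2t w2 \<eta> has_real_derivative
      2 * (r2t*l - s2t*\<gamma>) / S^3 - 2*(w2+\<eta>) * mp_lm' \<gamma> l) (at l)"
    unfolding ridge_risk_def[abs_def] S_def using assms mp_root_pos[OF assms(3)]
    by (auto intro!: derivative_eq_intros mp_lm_has_derivative mp_lm'_has_derivative
        simp: field_simps)
  have "2 * r2t * mp_lm' \<gamma> l * zeta_of_lambda \<gamma> (s2t*\<gamma>/r2t) l
      = (r2t*l - s2t*\<gamma>) * (mp_lm' \<gamma> l * (l + 1 + \<gamma> + S)) / S^2"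
    unfolding zeta_of_lambda_def S_def[symmetric] S(2) using S(1) assms(2) by (simp add: field_simps)
  also have "\<dots> = 2 * (r2t*l - s2t*\<gamma>) / S^3"
    unfolding S_def mp_lm'_mult_conj[OF assms(1,3)] unfolding S_def[symmetric]
    using S(1) by (simp add: field_simps power2_eq_square power3_eq_cube)
  finally have zeta_part: "2 * r2t * mp_lm' \<gamma> l * zeta_of_lambda \<gamma> (s2t*\<gamma>/r2t) l
      = 2 * (r2t*l - s2t*\<gamma>) / S^3" .
  have "2 * r2t * mp_lm' \<gamma> l * (zeta_of_lambda \<gamma> (s2t*\<gamma>/r2t) l - conf_strength r2t w2 \<eta>)
      = 2 * r2t * mp_lm' \<gamma> l * zeta_of_lambda \<gamma> (s2t*\<gamma>/r2t) l - 2*(w2+\<eta>) * mp_lm' \<gamma> l"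
    unfolding conf_strength_def using assms(2) by (simp add: field_simps)
  then show ?thesis
    using deriv unfolding zeta_part by simp
qed

lemma zeta_of_lambda_has_derivative:
  assumes "\<gamma> > 0" "mp_disc \<gamma> l > 0"
  shows "(zeta_of_lambda \<gamma> s has_real_derivative zeta_of_lambda' \<gamma> s l) (at l)"
proof -
  have disc: "mp_disc \<gamma> l = mp_root \<gamma> l ^ 2"
    using mp_root_sq[OF assms(2)] by simp
  txt \<open>Eliminating \<open>(1-\<gamma>)\<^sup>2\<close> turns the claim into a polynomial identity in \<open>mp_root \<gamma> l\<close>.\<close>
  have sq: "(1-\<gamma>)^2 = mp_root \<gamma> l ^ 2 - l^2 - 2*(1+\<gamma>)*l"
    using disc by (simp add: mp_disc_def)
  show ?thesis
    unfolding zeta_of_lambda_def[abs_def] zeta_of_lambda'_def sq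
    using assms mp_root_pos[OF assms(2)]
    by (auto intro!: derivative_eq_intros mp_disc_has_derivative mp_root_has_derivative
        simp: disc field_simps power2_eq_square power4_eq_xxxx)
qed

lemma zeta_of_lambda'_pos:
  assumes "\<gamma> > 0" "s > 0" "l \<ge> 0" "mp_disc \<gamma> l > 0"
  shows "zeta_of_lambda' \<gamma> s l > 0"
proof -
  have S: "mp_root \<gamma> l > 0" "l < mp_root \<gamma> l" "mp_root \<gamma> l < l + 1 + \<gamma>"
    using mp_root_pos mp_root_bounds assms by auto
  then have "(1-\<gamma>)^2 + l * (mp_root \<gamma> l - l) + s * (2 * (l + 1 + \<gamma>) - mp_root \<gamma> l) > 0"
    using assms by (intro add_nonneg_pos add_nonneg_nonneg) auto
  then show ?thesis
    unfolding zeta_of_lambda'_def using S assms by (intro mult_pos_pos divide_pos_pos) auto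
qed

lemma zeta_of_lambda_strict_mono:
  assumes "\<gamma> > 0" "s > 0" "0 \<le> x" "x < y" "mp_disc \<gamma> x > 0"
  shows "zeta_of_lambda \<gamma> s x < zeta_of_lambda \<gamma> s y"
proof (rule DERIV_pos_imp_less[OF assms(4)])
  fix z assume "x \<le> z"
  then have "mp_disc \<gamma> z > 0"
    using mp_disc_pos_mono[OF assms(1,3) _ assms(5)] by simp
  then show "(zeta_of_lambda \<gamma> s has_real_derivative zeta_of_lambda' \<gamma> s z) (at z)"
    by (rule zeta_of_lambda_has_derivative[OF assms(1)])
next
  fix z assume "x < z"
  then have "mp_disc \<gamma> z > 0"
    using mp_disc_pos_mono[OF assms(1,3) _ assms(5)] by simp
  with \<open>x < z\<close> show "zeta_of_lambda' \<gamma> s z > 0"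
    using zeta_of_lambda'_pos[OF assms(1,2)] assms(3) by simp
qed

lemma zeta_of_lambda_less_one:
  assumes "\<gamma> > 0" "s > 0" "l > 0"
  shows "zeta_of_lambda \<gamma> s l < 1"
proof -
  have Q: "mp_disc \<gamma> l > 0"
    using mp_disc_pos assms by auto
  have S: "mp_root \<gamma> l > 0" "mp_root \<gamma> l < l + 1 + \<gamma>"
    using mp_root_pos mp_root_bounds assms Q by auto
  have "(l - s) * (l + 1 + \<gamma> + mp_root \<gamma> l) < l * (l + 1 + \<gamma> + mp_root \<gamma> l)"
    using S assms by (intro mult_strict_right_mono) auto
  also have "\<dots> \<le> l * (2 * (l + 1 + \<gamma>))"
    using S assms by (intro mult_left_mono) auto
  also have "\<dots> \<le> 2 * mp_disc \<gamma> l"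
  proof -
    have "2 * mp_disc \<gamma> l - l * (2 * (l + 1 + \<gamma>)) = 2 * (1+\<gamma>) * l + 2 * (1-\<gamma>)^2"
      by (simp add: mp_disc_def power2_eq_square algebra_simps)
    moreover have "2 * (1+\<gamma>) * l + 2 * (1-\<gamma>)^2 \<ge> 0"
      using assms by simp
    ultimately show ?thesis
      by linarith
  qed
  finally show ?thesis
    unfolding zeta_of_lambda_def using Q by simp
qed

lemma zeta_of_lambda_at_top: "\<gamma> > 0 \<Longrightarrow> (zeta_of_lambda \<gamma> s \<longlongrightarrow> 1) at_top"
  unfolding zeta_of_lambda_def[abs_def] mp_root_def mp_disc_def by real_asymp

lemma zeta_of_lambda_1_at_right_0:
  assumes "s > 0"
  shows "filterlim (zeta_of_lambda 1 s) at_bot (at_right 0)"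
proof -
  have "zeta_of_lambda 1 s = (\<lambda>l. (l - s) * (l + 2 + sqrt (l^2 + 4*l)) / (2 * (l^2 + 4*l)))"
    by (simp add: fun_eq_iff zeta_of_lambda_def mp_root_def mp_disc_def)
  then show ?thesis
    using assms by (simp only:) real_asymp
qed

lemma zeta_of_lambda_0:
  assumes "\<gamma> > 0" "\<gamma> \<noteq> 1"
  shows "zeta_of_lambda \<gamma> s 0 = - s * max 1 \<gamma> / (1-\<gamma>)^2"
proof -
  have "mp_root \<gamma> 0 = \<bar>1 - \<gamma>\<bar>"
    unfolding mp_root_def mp_disc_def by simp
  moreover have "1 + \<gamma> + \<bar>1 - \<gamma>\<bar> = 2 * max 1 \<gamma>"
    by (auto simp: max_def abs_if)
  ultimately show ?thesis
    unfolding zeta_of_lambda_def mp_disc_def using assms by (simp add: field_simps)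
qed

lemma rho_thr_less_iff:
  assumes "\<gamma> > 0" "r2t > 0" "s2t > 0"
  shows "rho_thr \<gamma> (r2t/s2t) < ereal \<zeta> \<longleftrightarrow> \<gamma> = 1 \<or> zeta_of_lambda \<gamma> (s2t*\<gamma>/r2t) 0 < \<zeta>"
proof (cases "\<gamma> = 1")
  case False
  then have "zeta_of_lambda \<gamma> (s2t*\<gamma>/r2t) 0 = - (1 / (r2t/s2t)) * (\<gamma> * max 1 \<gamma>) / (1-\<gamma>)^2"
    using assms zeta_of_lambda_0 by simp
  with False show ?thesis
    unfolding rho_thr_def by simp
qed (simp add: rho_thr_def)

lemma isCont_zeta_of_lambda: "\<gamma> > 0 \<Longrightarrow> mp_disc \<gamma> l > 0 \<Longrightarrow> isCont (zeta_of_lambda \<gamma> s) l"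
  using zeta_of_lambda_has_derivative DERIV_isCont by blast

lemma strict_mono_on_zeta_of_lambda:
  assumes "\<gamma> > 0" "s > 0"
  shows "strict_mono_on {0<..} (zeta_of_lambda \<gamma> s)"
  using zeta_of_lambda_strict_mono[OF assms] mp_disc_pos[OF assms(1)]
  by (intro strict_mono_onI) simp

lemma eventually_zeta_of_lambda_less:
  assumes "\<gamma> > 0" "s > 0" "\<gamma> = 1 \<or> zeta_of_lambda \<gamma> s 0 < \<zeta>"
  shows "eventually (\<lambda>l. zeta_of_lambda \<gamma> s l < \<zeta>) (at_right 0)"
proof (cases "\<gamma> = 1")
  case True
  then show ?thesis
    using zeta_of_lambda_1_at_right_0[OF assms(2)] by (simp add: filterlim_at_bot_dense)
next
  case False
  then have "(zeta_of_lambda \<gamma> s \<longlongrightarrow> zeta_of_lambda \<gamma> s 0) (at_right 0)"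
    using isCont_zeta_of_lambda[OF assms(1) mp_disc_zero_pos]
    by (simp add: isCont_def filterlim_at_split)
  with False assms(3) show ?thesis
    by (simp add: order_tendstoD(2))
qed

lemma zeta_of_lambda_image:
  assumes "\<gamma> > 0" "s > 0"
  shows "zeta_of_lambda \<gamma> s ` {0<..} = {\<zeta>. (\<gamma> = 1 \<or> zeta_of_lambda \<gamma> s 0 < \<zeta>) \<and> \<zeta> < 1}"
proof (intro equalityI subsetI)
  fix \<zeta> assume "\<zeta> \<in> zeta_of_lambda \<gamma> s ` {0<..}"
  then show "\<zeta> \<in> {\<zeta>. (\<gamma> = 1 \<or> zeta_of_lambda \<gamma> s 0 < \<zeta>) \<and> \<zeta> < 1}"
    using zeta_of_lambda_less_one[OF assms] zeta_of_lambda_strict_mono[OF assms order.refl]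
      mp_disc_zero_pos by auto
next
  fix \<zeta> assume "\<zeta> \<in> {\<zeta>. (\<gamma> = 1 \<or> zeta_of_lambda \<gamma> s 0 < \<zeta>) \<and> \<zeta> < 1}"
  then have \<zeta>: "\<gamma> = 1 \<or> zeta_of_lambda \<gamma> s 0 < \<zeta>" "\<zeta> < 1"
    by auto
  obtain a where a: "a > 0" "zeta_of_lambda \<gamma> s a < \<zeta>"
    using eventually_zeta_of_lambda_less[OF assms \<zeta>(1)] eventually_at_right_field
    by (metis dense zero_less_one)
  obtain b where b: "b > a" "zeta_of_lambda \<gamma> s b > \<zeta>"
    using order_tendstoD(1)[OF zeta_of_lambda_at_top[OF assms(1)] \<zeta>(2)]
      eventually_gt_at_top[of a]
    by (metis (mono_tags, lifting) eventually_conj eventually_happens' trivial_limit_at_top_linorder)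
  have "continuous_on {a..b} (zeta_of_lambda \<gamma> s)"
    using a(1) mp_disc_pos[OF assms(1)]
    by (intro continuous_at_imp_continuous_on ballI isCont_zeta_of_lambda[OF assms(1)]) auto
  then obtain l where "a \<le> l" "zeta_of_lambda \<gamma> s l = \<zeta>"
    using IVT'[of "zeta_of_lambda \<gamma> s" a \<zeta> b] a b by auto
  with a(1) show "\<zeta> \<in> zeta_of_lambda \<gamma> s ` {0<..}"
    by force
qed

definition lambda_of_zeta :: "real \<Rightarrow> real \<Rightarrow> real \<Rightarrow> real" where
  "lambda_of_zeta \<gamma> s = the_inv_into {0<..} (zeta_of_lambda \<gamma> s)"

lemma lambda_of_zeta_zeta_of_lambda:
  assumes "\<gamma> > 0" "s > 0" "l > 0"
  shows "lambda_of_zeta \<gamma> s (zeta_of_lambda \<gamma> s l) = l"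
  unfolding lambda_of_zeta_def
  by (rule the_inv_into_f_f[OF strict_mono_on_imp_inj_on[OF strict_mono_on_zeta_of_lambda[OF assms(1,2)]]])
     (use assms(3) in simp)

lemma lambda_of_zeta:
  assumes "\<gamma> > 0" "s > 0" "\<zeta> \<in> zeta_of_lambda \<gamma> s ` {0<..}"
  shows "lambda_of_zeta \<gamma> s \<zeta> > 0" "zeta_of_lambda \<gamma> s (lambda_of_zeta \<gamma> s \<zeta>) = \<zeta>"
  using assms(3) lambda_of_zeta_zeta_of_lambda[OF assms(1,2)] by auto

lemma lambda_of_zeta_has_derivative:
  assumes "\<gamma> > 0" "s > 0" "\<zeta> \<in> zeta_of_lambda \<gamma> s ` {0<..}"
  defines "l \<equiv> lambda_of_zeta \<gamma> s \<zeta>"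
  shows "(lambda_of_zeta \<gamma> s has_real_derivative inverse (zeta_of_lambda' \<gamma> s l)) (at \<zeta>)"
    and "inverse (zeta_of_lambda' \<gamma> s l) > 0"
proof -
  have l: "l > 0" "zeta_of_lambda \<gamma> s l = \<zeta>"
    using lambda_of_zeta[OF assms(1-3)] by (simp_all add: l_def)
  have disc: "mp_disc \<gamma> l > 0"
    using mp_disc_pos[OF assms(1) l(1)] .
  show "inverse (zeta_of_lambda' \<gamma> s l) > 0"
    using zeta_of_lambda'_pos[OF assms(1,2) _ disc] l(1) by simp
  define a where "a = (if \<gamma> = 1 then \<zeta> - 1 else zeta_of_lambda \<gamma> s 0)"
  have image: "y \<in> zeta_of_lambda \<gamma> s ` {0<..}" if "a < y" "y < 1" for y
    using that unfolding zeta_of_lambda_image[OF assms(1,2)] a_def by (auto split: if_splits)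
  have \<zeta>: "a < \<zeta>" "\<zeta> < 1"
    using assms(3) unfolding zeta_of_lambda_image[OF assms(1,2)] a_def by auto
  have "isCont (lambda_of_zeta \<gamma> s) (zeta_of_lambda \<gamma> s l)"
  proof (rule isCont_inverse_function2[of "l/2" l "l+1"])
    fix z assume "l/2 \<le> z"
    then have "z > 0"
      using l(1) by simp
    then show "lambda_of_zeta \<gamma> s (zeta_of_lambda \<gamma> s z) = z"
      and "isCont (zeta_of_lambda \<gamma> s) z"
      by (simp_all add: lambda_of_zeta_zeta_of_lambda[OF assms(1,2)]
          isCont_zeta_of_lambda[OF assms(1) mp_disc_pos[OF assms(1)]])
  qed (use l(1) in auto)
  then have "isCont (lambda_of_zeta \<gamma> s) \<zeta>"
    using l(2) by simp
  moreover have "(zeta_of_lambda \<gamma> s has_real_derivative zeta_of_lambda' \<gamma> s l)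
      (at (lambda_of_zeta \<gamma> s \<zeta>))"
    unfolding l_def[symmetric] by (rule zeta_of_lambda_has_derivative[OF assms(1) disc])
  moreover have "zeta_of_lambda' \<gamma> s l \<noteq> 0"
    using zeta_of_lambda'_pos[OF assms(1,2) _ disc] l(1) by simp
  ultimately show "(lambda_of_zeta \<gamma> s has_real_derivative inverse (zeta_of_lambda' \<gamma> s l)) (at \<zeta>)"
    using lambda_of_zeta(2)[OF assms(1,2) image] \<zeta>
    by (intro DERIV_inverse_function[where a = a and b = 1])
qed

lemma ridge_risk_strict_mono:
  assumes "\<gamma> > 0" "r2t > 0" "s2t > 0" "0 \<le> a" "a < b" "mp_disc \<gamma> a > 0"
    and "conf_strength r2t w2 \<eta> \<le> zeta_of_lambda \<gamma> (s2t*\<gamma>/r2t) a"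
  shows "ridge_risk \<gamma> r2t s2t w2 \<eta> a < ridge_risk \<gamma> r2t s2t w2 \<eta> b"
proof (rule DERIV_pos_imp_less[OF assms(5)])
  fix z assume "a \<le> z"
  then have "mp_disc \<gamma> z > 0"
    using mp_disc_pos_mono[OF assms(1,4) _ assms(6)] by simp
  then show "(ridge_risk \<gamma> r2t s2t w2 \<eta> has_real_derivative
      2 * r2t * mp_lm' \<gamma> z * (zeta_of_lambda \<gamma> (s2t*\<gamma>/r2t) z - conf_strength r2t w2 \<eta>)) (at z)"
    by (rule ridge_risk_has_derivative[OF assms(1,2)])
next
  fix z assume "a < z"
  then have "mp_disc \<gamma> z > 0"
    using mp_disc_pos_mono[OF assms(1,4) _ assms(6)] by simp
  moreover have "zeta_of_lambda \<gamma> (s2t*\<gamma>/r2t) a < zeta_of_lambda \<gamma> (s2t*\<gamma>/r2t) z"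
    using zeta_of_lambda_strict_mono[OF assms(1) _ assms(4) \<open>a < z\<close> assms(6)] assms(1-3) by simp
  ultimately show "2 * r2t * mp_lm' \<gamma> z * (zeta_of_lambda \<gamma> (s2t*\<gamma>/r2t) z - conf_strength r2t w2 \<eta>) > 0"
    using mp_lm'_pos[OF assms(1)] assms(2,4,7) \<open>a < z\<close> by simp
qed

lemma ridge_risk_strict_antimono:
  assumes "\<gamma> > 0" "r2t > 0" "s2t > 0" "0 < a" "a < b"
    and "zeta_of_lambda \<gamma> (s2t*\<gamma>/r2t) b \<le> conf_strength r2t w2 \<eta>"
  shows "ridge_risk \<gamma> r2t s2t w2 \<eta> a > ridge_risk \<gamma> r2t s2t w2 \<eta> b"
proof (rule DERIV_neg_imp_greater[OF assms(5)])
  fix z assume "a \<le> z"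
  then have "mp_disc \<gamma> z > 0"
    using mp_disc_pos[OF assms(1)] assms(4) by simp
  then show "(ridge_risk \<gamma> r2t s2t w2 \<eta> has_real_derivative
      2 * r2t * mp_lm' \<gamma> z * (zeta_of_lambda \<gamma> (s2t*\<gamma>/r2t) z - conf_strength r2t w2 \<eta>)) (at z)"
    by (rule ridge_risk_has_derivative[OF assms(1,2)])
next
  fix z assume "a < z" "z < b"
  then have "mp_disc \<gamma> z > 0"
    using mp_disc_pos[OF assms(1)] assms(4) by simp
  moreover have "zeta_of_lambda \<gamma> (s2t*\<gamma>/r2t) z < zeta_of_lambda \<gamma> (s2t*\<gamma>/r2t) b"
    using zeta_of_lambda_strict_mono[OF assms(1) _ _ \<open>z < b\<close> \<open>mp_disc \<gamma> z > 0\<close>]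
      assms(1-4) \<open>a < z\<close> by simp
  ultimately show "2 * r2t * mp_lm' \<gamma> z * (zeta_of_lambda \<gamma> (s2t*\<gamma>/r2t) z - conf_strength r2t w2 \<eta>) < 0"
    using mp_lm'_pos[OF assms(1)] assms(2,4,6) \<open>a < z\<close> by (simp add: mult_pos_neg)
qed

lemma ridge_risk_at_top:
  assumes "\<gamma> > 0"
  shows "(ridge_risk \<gamma> r2t s2t w2 \<eta> \<longlongrightarrow> s2t + r2t - 2*\<eta>) at_top"
proof -
  have "(mp_lm \<gamma> \<longlongrightarrow> 1) at_top" "(mp_lm' \<gamma> \<longlongrightarrow> 0) at_top" "((\<lambda>l. l * mp_lm' \<gamma> l) \<longlongrightarrow> 0) at_top"
    unfolding mp_lm_def[abs_def] mp_lm'_def[abs_def] mp_root_def mp_disc_def using assms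
    by (real_asymp simp: field_simps)+
  then have "(ridge_risk \<gamma> r2t s2t w2 \<eta> \<longlongrightarrow> 2*w2 + s2t + r2t*(1 - 0) - 2*(w2+\<eta>)*1 + s2t*\<gamma>*0) at_top"
    unfolding ridge_risk_def[abs_def] by (intro tendsto_intros)
  then show ?thesis
    by (simp add: add_diff_eq)
qed

lemma strict_mono_on_tendsto_at_right_0:
  fixes f :: "real \<Rightarrow> real"
  assumes "strict_mono_on {0<..} f" "(f \<longlongrightarrow> L) (at_right 0)"
  shows "\<forall>x>0. L < f x" "\<not> (f \<longlongrightarrow> L) at_top"
proof -
  have mono: "f x < f y" if "0 < x" "x < y" for x y
    using strict_mono_onD[OF assms(1)] that by simp
  have below: "L \<le> f x" if "x > 0" for x
  proof (rule tendsto_upperbound[OF assms(2)])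
    show "eventually (\<lambda>y. f y \<le> f x) (at_right 0)"
      unfolding eventually_at_right_field using that by (intro exI[of _ x]) (auto intro: less_imp_le mono)
  qed simp
  have less: "L < f x" if "x > 0" for x
    using below[of "x/2"] mono[of "x/2" x] that by simp
  then show "\<forall>x>0. L < f x"
    by blast
  show "\<not> (f \<longlongrightarrow> L) at_top"
  proof
    assume "(f \<longlongrightarrow> L) at_top"
    moreover have "eventually (\<lambda>y. f 1 \<le> f y) at_top"
      using eventually_ge_at_top[of 1] by (rule eventually_mono) (use mono in \<open>force simp: le_less\<close>)
    ultimately have "f 1 \<le> L"
      by (rule tendsto_lowerbound) simp
    with less[OF zero_less_one] show False
      by simp
  qed
qed

lemma strict_antimono_on_tendsto_at_top:
  fixes f :: "real \<Rightarrow> real"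
  assumes "strict_antimono_on {0<..} f" "(f \<longlongrightarrow> L) at_top"
  shows "\<forall>x>0. L < f x" "\<not> (f \<longlongrightarrow> L) (at_right 0)"
proof -
  have anti: "f y < f x" if "0 < x" "x < y" for x y
    using monotone_onD[OF assms(1)] that by simp
  have below: "L \<le> f x" if "x > 0" for x
  proof (rule tendsto_upperbound[OF assms(2)])
    show "eventually (\<lambda>y. f y \<le> f x) at_top"
      using eventually_ge_at_top[of x] by (rule eventually_mono) (use anti that in \<open>force simp: le_less\<close>)
  qed simp
  have less: "L < f x" if "x > 0" for x
    using below[of "x+1"] anti[of x "x+1"] that by simp
  then show "\<forall>x>0. L < f x"
    by blast
  show "\<not> (f \<longlongrightarrow> L) (at_right 0)"
  proof
    assume "(f \<longlongrightarrow> L) (at_right 0)"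
    moreover have "eventually (\<lambda>y. f 1 \<le> f y) (at_right 0)"
      unfolding eventually_at_right_field by (intro exI[of _ 1]) (auto intro: less_imp_le anti)
    ultimately have "f 1 \<le> L"
      by (rule tendsto_lowerbound) simp
    with less[OF zero_less_one] show False
      by simp
  qed
qed

lemma causal_risk_infimum_at_right_0:
  assumes "\<gamma> > 0" "\<gamma> \<noteq> 1" "r2t > 0" "s2t > 0"
    and "conf_strength r2t w2 \<eta> \<le> zeta_of_lambda \<gamma> (s2t*\<gamma>/r2t) 0"
  defines "R \<equiv> causal_risk \<gamma> r2t s2t w2 \<eta>"
  shows "\<exists>L. (R \<longlongrightarrow> L) (at_right 0) \<and> (\<forall>l>0. L < R l) \<and> \<not> (R \<longlongrightarrow> L) at_top"
proof -
  let ?E = "ridge_risk \<gamma> r2t s2t w2 \<eta>"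
  have R: "R l = ?E l" if "l > 0" for l
    unfolding R_def using causal_risk_eq_ridge_risk[OF assms(1) that] .
  have disc0: "mp_disc \<gamma> 0 > 0"
    using mp_disc_zero_pos[OF assms(2)] .
  have "strict_mono_on {0<..} R"
  proof (rule strict_mono_onI)
    fix x y :: real assume "x \<in> {0<..}" "y \<in> {0<..}" "x < y"
    moreover have "zeta_of_lambda \<gamma> (s2t*\<gamma>/r2t) 0 < zeta_of_lambda \<gamma> (s2t*\<gamma>/r2t) x"
      using zeta_of_lambda_strict_mono[OF assms(1) _ order.refl _ disc0] assms(1,3,4) \<open>x \<in> {0<..}\<close>
      by simp
    ultimately show "R x < R y"
      using ridge_risk_strict_mono[OF assms(1,3,4)] mp_disc_pos[OF assms(1)] assms(5) R by simp
  qed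
  moreover have "(?E \<longlongrightarrow> ?E 0) (at_right 0)"
    using ridge_risk_has_derivative[OF assms(1,3) disc0] DERIV_isCont continuous_within
      continuous_at_split by blast
  then have "(R \<longlongrightarrow> ?E 0) (at_right 0)"
    by (rule Lim_transform_eventually)
       (use eventually_at_right_less[of 0] in \<open>rule eventually_mono, simp add: R\<close>)
  ultimately show ?thesis
    using strict_mono_on_tendsto_at_right_0 by blast
qed

lemma causal_risk_infimum_at_top:
  assumes "\<gamma> > 0" "r2t > 0" "s2t > 0" "conf_strength r2t w2 \<eta> \<ge> 1"
  defines "R \<equiv> causal_risk \<gamma> r2t s2t w2 \<eta>"
  shows "\<exists>L. (R \<longlongrightarrow> L) at_top \<and> (\<forall>l>0. L < R l) \<and> \<not> (R \<longlongrightarrow> L) (at_right 0)"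
proof -
  let ?E = "ridge_risk \<gamma> r2t s2t w2 \<eta>"
  have R: "R l = ?E l" if "l > 0" for l
    unfolding R_def using causal_risk_eq_ridge_risk[OF assms(1) that] .
  have "strict_antimono_on {0<..} R"
  proof (rule monotone_onI)
    fix x y :: real assume "x \<in> {0<..}" "y \<in> {0<..}" "x < y"
    moreover have "zeta_of_lambda \<gamma> (s2t*\<gamma>/r2t) y < 1"
      using zeta_of_lambda_less_one[OF assms(1)] assms(1-3) \<open>y \<in> {0<..}\<close> by simp
    ultimately show "R y < R x"
      using ridge_risk_strict_antimono[OF assms(1-3)] assms(4) R by simp
  qed
  moreover have "(R \<longlongrightarrow> s2t + r2t - 2*\<eta>) at_top"
    using ridge_risk_at_top[OF assms(1), of r2t s2t w2 \<eta>]
    by (rule Lim_transform_eventually)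
       (use eventually_gt_at_top[of 0] in \<open>rule eventually_mono, simp add: R\<close>)
  ultimately show ?thesis
    using strict_antimono_on_tendsto_at_top by blast
qed

lemma causal_risk_unique_minimum:
  assumes "\<gamma> > 0" "r2t > 0" "s2t > 0" "l0 > 0" "l > 0" "l \<noteq> l0"
    and "zeta_of_lambda \<gamma> (s2t*\<gamma>/r2t) l0 = conf_strength r2t w2 \<eta>"
  shows "causal_risk \<gamma> r2t s2t w2 \<eta> l0 < causal_risk \<gamma> r2t s2t w2 \<eta> l"
proof (cases "l0 < l")
  case True
  then show ?thesis
    using ridge_risk_strict_mono[OF assms(1-3) _ True mp_disc_pos[OF assms(1,4)]] assms
    by (simp add: causal_risk_eq_ridge_risk)
next
  case False
  with assms(6) have "l < l0"
    by simp
  then show ?thesis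
    using ridge_risk_strict_antimono[OF assms(1-3,5)] assms
    by (simp add: causal_risk_eq_ridge_risk)
qed

theorem theorem4:
  fixes r2t s2t \<gamma> :: real
  assumes "r2t > 0" and "s2t > 0" and "\<gamma> > 0"
  defines "\<rho> \<equiv> rho_thr \<gamma> (r2t / s2t)"
  shows "\<exists>\<Lambda> :: real \<Rightarrow> real.
     (\<forall>\<zeta>. \<rho> < ereal \<zeta> \<and> \<zeta> < 1 \<longrightarrow>
          \<Lambda> \<zeta> > 0 \<and> (\<exists>D. (\<Lambda> has_real_derivative D) (at \<zeta>) \<and> D > 0)) \<and>
     (\<forall>w2 \<eta>. admissible r2t w2 \<eta> \<longrightarrow>
        (let R = causal_risk \<gamma> r2t s2t w2 \<eta>; \<zeta> = conf_strength r2t w2 \<eta> in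
          (ereal \<zeta> \<le> \<rho> \<longrightarrow>
             (\<exists>L. (R \<longlongrightarrow> L) (at_right 0) \<and> (\<forall>lam>0. L < R lam) \<and> \<not> (R \<longlongrightarrow> L) at_top)) \<and>
          (\<rho> < ereal \<zeta> \<and> \<zeta> < 1 \<longrightarrow>
             (\<forall>lam>0. lam \<noteq> \<Lambda> \<zeta> \<longrightarrow> R (\<Lambda> \<zeta>) < R lam)) \<and>
          (\<zeta> \<ge> 1 \<longrightarrow>
             (\<exists>L. (R \<longlongrightarrow> L) at_top \<and> (\<forall>lam>0. L < R lam) \<and> \<not> (R \<longlongrightarrow> L) (at_right 0)))))"
proof -
  define s where "s = s2t*\<gamma>/r2t"
  have s: "s > 0"
    using assms by (simp add: s_def)
  have interior: "\<rho> < ereal \<zeta> \<and> \<zeta> < 1 \<longleftrightarrow> \<zeta> \<in> zeta_of_lambda \<gamma> s ` {0<..}" for \<zeta>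
    unfolding zeta_of_lambda_image[OF assms(3) s] \<rho>_def rho_thr_less_iff[OF assms(3,1,2), folded s_def]
    by simp
  have below: "\<gamma> \<noteq> 1 \<and> \<zeta> \<le> zeta_of_lambda \<gamma> s 0" if "ereal \<zeta> \<le> \<rho>" for \<zeta>
    using that unfolding \<rho>_def not_less[symmetric] rho_thr_less_iff[OF assms(3,1,2), folded s_def]
    by auto
  show ?thesis
    unfolding Let_def
    apply (intro exI[of _ "lambda_of_zeta \<gamma> s"] conjI allI impI)
    subgoal for \<zeta>
      by (rule lambda_of_zeta(1)[OF assms(3) s]) (simp add: interior[symmetric])
    subgoal for \<zeta>
      using lambda_of_zeta_has_derivative[OF assms(3) s, of \<zeta>] by (auto simp: interior[symmetric])
    subgoal for w2 \<eta>
      using below[of "conf_strength r2t w2 \<eta>"]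
      by (intro causal_risk_infimum_at_right_0[OF assms(3) _ assms(1,2)]) (simp_all add: s_def)
    subgoal premises p for w2 \<eta> l
    proof -
      have "conf_strength r2t w2 \<eta> \<in> zeta_of_lambda \<gamma> s ` {0<..}"
        using p(2) interior by blast
      then show ?thesis
        using causal_risk_unique_minimum[OF assms(3,1,2), folded s_def] lambda_of_zeta[OF assms(3) s] p(3,4)
        by simp
    qed
    subgoal for w2 \<eta>
      by (rule causal_risk_infimum_at_top[OF assms(3,1,2)])
    done
qed

end
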